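(* Let $\Omega\subset\mathbb{R}^n$ be a bounded connected open set with Lipschitz boundary (or a bounded interval if $n=1$). Given measurable sets $E_s\subset\mathbb{R}^n$ for $s\in(0,1)$ with $\chi_{E_s}\to\chi_E$ in $L^1(\Omega)$ as $s\uparrow1$, $\mathcal{J}^1_s(E_s,\Omega)<\infty$ and $\mathcal{J}^1_s(E,\Omega)<\infty$ for all $s$, and given $\delta_1>\delta_2>0$, there exist measurable sets $F_s\subset\mathbb{R}^n$, $s\in(0,1)$, such that (a) $\chi_{F_s}\to\chi_E$ in $L^1(\Omega)$ as $s\uparrow1$; (b) $F_s\cap(\Omega\setminus\Omega_{\delta_1})=E_s\cap(\Omega\setminus\Omega_{\delta_1})$ and $F_s\cap\Omega_{\delta_2}=E\cap\Omega_{\delta_2}$; (c) for all $\varepsilon>0$, $$\liminf_{s\uparrow1}(1-s)\mathcal{J}^1_s(F_s,\Omega)\le\liminf_{s\uparrow1}(1-s)\mathcal{J}^1_s(E_s,\Omega)+\limsup_{s\uparrow1}(1-s)\mathcal{J}^1_s(E,\Omega_{\delta_1+\varepsilon}).$$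
   Context: $\mathcal{J}^1_s(E,U):=\int_{E\cap U}\int_{E^c\cap U}|x-y|^{-n-s}dx\,dy$. For $\delta>0$, $\Omega_\delta:=\{x\in\Omega:d(x,\Omega^c)\le\delta\}$. *)

theory Defs
  imports "HOL-Analysis.Analysis"
begin

definition J1 :: "real \<Rightarrow> 'a::euclidean_space set \<Rightarrow> 'a set \<Rightarrow> ennreal" where
  "J1 s E U = (\<integral>\<^sup>+ x. \<integral>\<^sup>+ y. indicator (E \<inter> U) x * indicator (- E \<inter> U) y *
      ennreal (norm (x - y) powr (- (real DIM('a) + s))) \<partial>lebesgue \<partial>lebesgue)"

definition strip :: "'a::euclidean_space set \<Rightarrow> real \<Rightarrow> 'a set" where
  "strip \<Omega> \<delta> = {x \<in> \<Omega>. infdist x (- \<Omega>) \<le> \<delta>}"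

text \<open>Lipschitz boundary (coordinate-free): near every boundary point the set is,
  in a suitable orthonormal direction v, the strict subgraph of a Lipschitz function
  defined on the hyperplane orthogonal to v.\<close>
definition lipschitz_boundary :: "'a::euclidean_space set \<Rightarrow> bool" where
  "lipschitz_boundary \<Omega> \<longleftrightarrow>
     (\<forall>x \<in> frontier \<Omega>. \<exists>r>0. \<exists>v g C. norm v = 1 \<and>
        C-lipschitz_on {z. z \<bullet> v = 0} (g :: 'a \<Rightarrow> real) \<and>
        \<Omega> \<inter> ball x r = {y \<in> ball x r. y \<bullet> v < g (y - (y \<bullet> v) *\<^sub>R v)})"

definition L1dist_char :: "'a::euclidean_space set \<Rightarrow> 'a set \<Rightarrow> 'a set \<Rightarrow> ennreal" where
  "L1dist_char \<Omega> A B = (\<integral>\<^sup>+ x. ennreal (\<bar>indicator A x - indicator B x\<bar> * indicator \<Omega> x) \<partial>lebesgue)"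

end

theory Submission
  imports Defs
begin

text \<open>For each \<open>s\<close> pick a depth \<open>t(s) \<in> (\<delta>\<^sub>2, \<delta>\<^sub>1)\<close> and let \<open>F\<^sub>s\<close> agree with \<open>E\<^sub>s\<close>
  at distance more than \<open>t(s)\<close> from \<open>\<Omega>\<^sup>c\<close> and with \<open>E\<close> at distance at most \<open>t(s)\<close>.
  A pair of points of \<open>\<Omega>\<close> separated by \<open>F\<^sub>s\<close> is then separated by \<open>E\<^sub>s\<close>, or by \<open>E\<close> inside
  \<open>\<Omega>\<^bsub>\<delta>\<^sub>1+\<epsilon>\<^esub>\<close>, or it straddles the level set \<open>{d(\<cdot>, \<Omega>\<^sup>c) = t(s)}\<close> with one point in
  \<open>E\<^sub>s \<triangle> E\<close>. Averaging this last contribution over \<open>t \<in> (\<delta>\<^sub>2, \<delta>\<^sub>1)\<close> and using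
  \<open>|d(x, \<Omega>\<^sup>c) - d(y, \<Omega>\<^sup>c)| \<le> |x - y|\<close> bounds it by \<open>C |(E\<^sub>s \<triangle> E) \<inter> \<Omega>| / ((1 - s)(\<delta>\<^sub>1 - \<delta>\<^sub>2))\<close>,
  so for a good depth it is \<open>o(1/(1 - s))\<close>.\<close>

lemma Liminf_add_Limsup_ennreal:
  fixes f g :: "_ \<Rightarrow> ennreal"
  assumes F: "F \<noteq> bot"
  shows "Liminf F (\<lambda>x. f x + g x) \<le> Liminf F f + Limsup F g"
proof (rule ennreal_le_epsilon)
  fix e :: real assume fin: "Liminf F f + Limsup F g < top" and e: "0 < e"
  have "Limsup F g < top"
    using fin by (auto simp: top_unique)
  then have "Limsup F g < Limsup F g + ennreal e"
    using e by (cases "Limsup F g") (auto simp: ennreal_plus[symmetric] ennreal_less_iff simp del: ennreal_plus)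
  then have "eventually (\<lambda>x. g x < Limsup F g + ennreal e) F"
    by (rule Limsup_lessD)
  then have "Liminf F (\<lambda>x. f x + g x) \<le> Liminf F (\<lambda>x. f x + (Limsup F g + ennreal e))"
    by (intro Liminf_mono) (auto elim!: eventually_mono intro: add_left_mono less_imp_le)
  also have "\<dots> = Liminf F f + (Limsup F g + ennreal e)"
    by (rule Liminf_add_const[OF F])
  finally show "Liminf F (\<lambda>x. f x + g x) \<le> Liminf F f + Limsup F g + ennreal e"
    by (simp add: ac_simps)
qed

lemma Liminf_le_Liminf_add_Limsup_of_vanishing:
  fixes f g h r :: "_ \<Rightarrow> ennreal"
  assumes "F \<noteq> bot" "eventually (\<lambda>x. f x \<le> g x + h x + r x) F" "(r \<longlongrightarrow> 0) F"
  shows "Liminf F f \<le> Liminf F g + Limsup F h"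
proof -
  have "Liminf F f \<le> Liminf F (\<lambda>x. (g x + r x) + h x)"
    using assms(2) by (intro Liminf_mono) (auto elim!: eventually_mono simp: ac_simps)
  also have "\<dots> \<le> Liminf F (\<lambda>x. g x + r x) + Limsup F h"
    by (rule Liminf_add_Limsup_ennreal[OF assms(1)])
  also have "\<dots> \<le> Liminf F g + Limsup F r + Limsup F h"
    by (intro add_right_mono Liminf_add_Limsup_ennreal[OF assms(1)])
  also have "Limsup F r = 0"
    using lim_imp_Limsup[OF assms(1,3)] .
  finally show ?thesis
    by simp
qed

lemma exists_le_average:
  fixes f :: "real \<Rightarrow> ennreal"
  assumes "(\<integral>\<^sup>+t. f t \<partial>lborel) \<le> ennreal M" "0 \<le> M" "a < b"
  shows "\<exists>t\<in>{a<..<b}. f t \<le> ennreal (M / (b - a) + 1)"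
proof (rule ccontr)
  let ?c = "M / (b - a) + 1"
  assume "\<not> ?thesis"
  then have "ennreal ?c * indicator {a<..<b} t \<le> f t" for t
    by (auto simp: indicator_def less_imp_le not_le)
  then have "(\<integral>\<^sup>+t. ennreal ?c * indicator {a<..<b} t \<partial>lborel) \<le> ennreal M"
    using assms(1) by (blast intro: nn_integral_mono order_trans)
  then have "ennreal (?c * (b - a)) \<le> ennreal M"
    using assms by (simp add: nn_integral_cmult_indicator ennreal_mult)
  moreover have "?c * (b - a) = M + (b - a)"
    using assms by (simp add: field_simps)
  ultimately show False
    using assms by (simp add: ennreal_le_iff)
qed

section \<open>The kernel \<open>|x - y|^{1-n-s}\<close> on bounded sets\<close>

text \<open>On a set of diameter at most \<open>R\<close> the kernel \<open>|z - y|^{1-n-s}\<close> is dominated by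
  a sum of multiples of indicators of the balls of radii \<open>R / 2^k\<close>; integrating gives
  a geometric series with ratio \<open>2^{s-1}\<close>, whose sum is of order \<open>1/(1 - s)\<close>.\<close>

lemma dyadic_shell_index:
  fixes r R :: real
  assumes "0 < r" "r \<le> R"
  obtains k :: nat where "R / 2^(k+1) < r" "r \<le> R / 2^k"
proof -
  obtain m0 :: nat where "(1/2)^m0 < r / R"
    using real_arch_pow_inv[of "r/R" "1/2"] assms by auto
  then have ex: "\<exists>m::nat. R / 2^m < r"
    using assms by (auto simp: power_divide field_simps)
  define m where "m = (LEAST m::nat. R / 2^m < r)"
  have m: "R / 2^m < r"
    unfolding m_def by (rule LeastI_ex[OF ex])
  then obtain k where mk: "m = Suc k"
    using assms by (cases m) auto
  have "\<not> R / 2^k < r"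
    using not_less_Least[of k "\<lambda>m. R / 2^m < r"] mk m_def by auto
  then show ?thesis
    using that m mk by auto
qed

lemma dyadic_ball_term_eq:
  fixes R s V :: real and n k :: nat
  assumes "R > 0"
  shows "(R / 2^(k+1)) powr (1 - (real n + s)) * (V * (R / 2^k)^n)
         = V * 2 powr (real n + s - 1) * R powr (1 - s) * (2 powr (s - 1))^k"
proof -
  have "(R / 2^k)^n = exp (real n * (ln R - real k * ln 2))"
    using assms by (simp add: powr_realpow[symmetric] powr_def ln_div ln_realpow)
  moreover have "(R / 2^(k+1)) powr (1 - (real n + s)) = exp ((1 - (real n + s)) * (ln R - (real k + 1) * ln 2))"
    using assms by (simp add: powr_def ln_div ln_realpow ln_mult algebra_simps)
  moreover have "2 powr (real n + s - 1) = exp ((real n + s - 1) * ln 2)"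
    by (simp add: powr_def)
  moreover have "R powr (1 - s) = exp ((1 - s) * ln R)"
    using assms by (simp add: powr_def)
  moreover have "(2 powr (s - 1))^k = exp (real k * ((s - 1) * ln 2))"
    by (simp add: powr_def exp_of_nat_mult[symmetric])
  ultimately show ?thesis
    by (simp add: exp_add[symmetric] algebra_simps)
qed

lemma one_minus_two_powr_ge:
  fixes s :: real
  assumes "0 < s" "s < 1"
  shows "(1 - s) / 4 \<le> 1 - 2 powr (s - 1)"
proof -
  define y where "y = (1 - s) * ln 2"
  have ln2: "1/2 \<le> ln (2::real)" "ln (2::real) < 1"
    using ln2_ge_two_thirds ln_2_less_1 by auto
  have y: "0 < y" "y \<le> 1"
    unfolding y_def using assms ln2 by (auto intro: mult_le_one)
  have "exp (-y) * (1 + y) \<le> exp (-y) * exp y"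
    by (intro mult_left_mono) auto
  moreover have "1 \<le> (1 - y/2) * (1 + y)"
    using y by (simp add: algebra_simps)
  moreover have "exp (-y) * exp y = 1"
    by (simp add: mult_exp_exp)
  ultimately have "exp (-y) * (1 + y) \<le> (1 - y/2) * (1 + y)"
    by linarith
  then have "exp (-y) \<le> 1 - y/2"
    using y by (simp add: mult_le_cancel_right_pos)
  moreover have "(1 - s) * (1/2) \<le> (1 - s) * ln 2"
    using assms ln2 by (intro mult_left_mono) auto
  then have "(1 - s) / 4 \<le> y / 2"
    unfolding y_def by simp
  moreover have "2 powr (s - 1) = exp (-y)"
    unfolding y_def by (simp add: powr_def algebra_simps)
  ultimately show ?thesis by linarith
qed

lemma dyadic_series_sum_le:
  fixes s R V :: real and n :: nat
  assumes s: "0 < s" "s < 1" and "R > 0" "V \<ge> 0"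
  shows "V * 2 powr (real n + s - 1) * R powr (1 - s) / (1 - 2 powr (s - 1))
      \<le> 4 * V * 2 powr real n * (1 + R) / (1 - s)"
proof -
  have q: "(1 - s) / 4 \<le> 1 - 2 powr (s - 1)"
    by (rule one_minus_two_powr_ge[OF s])
  have "2 powr (real n + s - 1) \<le> 2 powr real n"
    using s by (intro powr_mono) auto
  moreover have "R powr (1 - s) \<le> 1 + R"
  proof (cases "R \<le> 1")
    case True
    then have "R powr (1 - s) \<le> 1"
      using assms by (intro powr_le1) auto
    then show ?thesis using assms by simp
  next
    case False
    then have "R powr (1 - s) \<le> R powr 1"
      using s by (intro powr_mono) auto
    then show ?thesis using assms by simp
  qed
  ultimately have "V * 2 powr (real n + s - 1) * R powr (1 - s) \<le> V * 2 powr real n * (1 + R)"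
    using assms by (intro mult_mono) auto
  moreover have "2 powr (s - 1) < 1" "1 / (1 - 2 powr (s - 1)) \<le> 4 / (1 - s)"
    using q s by (simp_all add: field_simps)
  ultimately have "V * 2 powr (real n + s - 1) * R powr (1 - s) * (1 / (1 - 2 powr (s - 1)))
        \<le> V * 2 powr real n * (1 + R) * (4 / (1 - s))"
    using assms by (intro mult_mono[of _ "V * 2 powr real n * (1 + R)"]) simp_all
  then show ?thesis by (simp add: field_simps)
qed

lemma riesz_kernel_le_dyadic_sum:
  fixes z y :: "'a::euclidean_space"
  assumes "0 < s" "0 < R" "\<Omega> \<subseteq> cball z R"
  shows "indicator \<Omega> y * ennreal (norm (z - y) powr (1 - (real DIM('a) + s)))
     \<le> (\<Sum>k. ennreal ((R / 2^(k+1)) powr (1 - (real DIM('a) + s))) * indicator (cball z (R / 2^k)) y)"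
proof (cases "y \<in> \<Omega> \<and> z \<noteq> y")
  case False
  then show ?thesis by auto
next
  case True
  let ?r = "norm (z - y)" and ?p = "1 - (real DIM('a) + s)"
  let ?g = "\<lambda>k. ennreal ((R / 2^(k+1)) powr ?p) * indicator (cball z (R / 2^k)) y"
  have r: "0 < ?r" "?r \<le> R"
    using True assms(3) by (auto simp: dist_norm)
  obtain k where k: "R / 2^(k+1) < ?r" "?r \<le> R / 2^k"
    using dyadic_shell_index[OF r] .
  have "?p \<le> 0"
    using assms(1) DIM_positive[where 'a='a] by linarith
  then have "indicator \<Omega> y * ennreal (?r powr ?p) \<le> ennreal ((R / 2^(k+1)) powr ?p)"
    using True k assms(2) by (auto intro!: ennreal_leI powr_mono2')
  also have "\<dots> = ?g k"
    using k by (simp add: dist_norm)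
  also have "\<dots> \<le> (\<Sum>k. ?g k)"
  proof -
    have "sum ?g {k} \<le> suminf ?g"
      by (rule sum_le_suminf) (auto intro: summableI)
    then show ?thesis
      by (simp only: sum.insert finite.emptyI empty_iff sum.empty add_0_right not_False_eq_True)
  qed
  finally show ?thesis .
qed

lemma nn_integral_riesz_kernel_le:
  fixes z :: "'a::euclidean_space"
  assumes s: "0 < s" "s < 1" and R: "0 < R" and \<Omega>: "\<Omega> \<subseteq> cball z R"
  shows "(\<integral>\<^sup>+y. indicator \<Omega> y * ennreal (norm (z - y) powr (1 - (real DIM('a) + s))) \<partial>lebesgue)
    \<le> ennreal (4 * unit_ball_vol (real DIM('a)) * 2 powr real DIM('a) * (1 + R) / (1 - s))"
proof -
  let ?n = "DIM('a)" and ?V = "unit_ball_vol (real DIM('a))" and ?p = "1 - (real DIM('a) + s)"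
  let ?g = "\<lambda>k y. ennreal ((R / 2^(k+1)) powr ?p) * indicator (cball z (R / 2^k)) y"
  let ?A = "?V * 2 powr (real ?n + s - 1) * R powr (1 - s)" and ?q = "2 powr (s - 1) :: real"
  have "(\<integral>\<^sup>+y. indicator \<Omega> y * ennreal (norm (z - y) powr ?p) \<partial>lebesgue)
     \<le> (\<integral>\<^sup>+y. (\<Sum>k. ?g k y) \<partial>lebesgue)"
    by (intro nn_integral_mono riesz_kernel_le_dyadic_sum s R \<Omega>)
  also have "\<dots> = (\<Sum>k. \<integral>\<^sup>+y. ?g k y \<partial>lebesgue)"
  proof (rule nn_integral_suminf)
    show "?g k \<in> borel_measurable lebesgue" for k
      by (intro borel_measurable_times_ennreal borel_measurable_const borel_measurable_indicator) simp
  qed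
  also have "\<dots> = (\<Sum>k. ennreal (?A * ?q^k))"
  proof (rule suminf_cong)
    fix k
    have "(\<integral>\<^sup>+y. ?g k y \<partial>lebesgue) = (\<integral>\<^sup>+y. ?g k y \<partial>lborel)"
      by (rule nn_integral_completion)
    also have "\<dots> = ennreal ((R / 2^(k+1)) powr ?p) * emeasure lborel (cball z (R / 2^k))"
      by (rule nn_integral_cmult_indicator) simp
    also have "\<dots> = ennreal ((R / 2^(k+1)) powr ?p * (?V * (R / 2^k)^?n))"
      using R by (simp add: emeasure_cball ennreal_mult)
    also have "\<dots> = ennreal (?A * ?q^k)"
      by (simp only: dyadic_ball_term_eq[OF R])
    finally show "(\<integral>\<^sup>+y. ?g k y \<partial>lebesgue) = ennreal (?A * ?q^k)" .
  qed
  also have "\<dots> = ennreal (?A * (1 / (1 - ?q)))"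
  proof (rule suminf_ennreal_eq)
    have "?q < 2 powr 0"
      using s by (intro powr_less_mono) auto
    then show "(\<lambda>k. ?A * ?q^k) sums (?A * (1 / (1 - ?q)))"
      by (intro sums_mult geometric_sums) simp
  qed simp
  also have "\<dots> \<le> ennreal (4 * ?V * 2 powr real ?n * (1 + R) / (1 - s))"
    using dyadic_series_sum_le[OF s R, where V="?V" and n="?n"] by (intro ennreal_leI) simp
  finally show ?thesis .
qed

lemma sigma_finite_lebesgue: "sigma_finite_measure (lebesgue :: 'a::euclidean_space measure)"
proof
  let ?A = "range (\<lambda>n::nat. cball (0::'a) (real n))"
  show "\<exists>A. countable A \<and> A \<subseteq> sets (lebesgue :: 'a measure) \<and> \<Union> A = space lebesgue \<and> (\<forall>a\<in>A. emeasure lebesgue a \<noteq> \<infinity>)"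
  proof (intro exI conjI)
    show "countable ?A" by simp
    show "?A \<subseteq> sets lebesgue" by auto
    show "\<Union> ?A = space lebesgue"
      by (auto simp: real_arch_simple)
    show "\<forall>a\<in>?A. emeasure lebesgue a \<noteq> \<infinity>"
      using emeasure_lborel_cball_finite by (auto simp: less_top)
  qed
qed

interpretation lebesgue: sigma_finite_measure "lebesgue :: 'a::euclidean_space measure"
  by (rule sigma_finite_lebesgue)

interpretation lebesgue_lebesgue: pair_sigma_finite "lebesgue :: 'a::euclidean_space measure" "lebesgue :: 'b::euclidean_space measure" ..

interpretation lborel_lebesgue: pair_sigma_finite "lborel :: 'a::euclidean_space measure" "lebesgue :: 'b::euclidean_space measure" ..

lemma borel_measurable_lebesgue_continuous:
  fixes f :: "'a::euclidean_space \<Rightarrow> 'b::metric_space"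
  shows "continuous_on UNIV f \<Longrightarrow> f \<in> borel_measurable lebesgue"
  by (intro measurable_completion) (simp add: borel_measurable_continuous_onI)

lemma borel_measurable_lebesgue_pair_continuous:
  fixes f :: "'a::euclidean_space \<times> 'b::euclidean_space \<Rightarrow> 'c::metric_space"
  assumes "continuous_on UNIV f"
  shows "f \<in> borel_measurable (lebesgue \<Otimes>\<^sub>M lebesgue)"
proof -
  have "(\<lambda>x. x) \<in> borel_measurable (lebesgue :: 'a measure)" "(\<lambda>x. x) \<in> borel_measurable (lebesgue :: 'b measure)"
    using id_borel_measurable_lebesgue by (simp_all add: id_def)
  then have "(\<lambda>p. (fst p, snd p)) \<in> (lebesgue :: 'a measure) \<Otimes>\<^sub>M (lebesgue :: 'b measure) \<rightarrow>\<^sub>M borel \<Otimes>\<^sub>M borel"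
    by (intro measurable_Pair measurable_compose[OF measurable_fst] measurable_compose[OF measurable_snd])
  then have "(\<lambda>p. p) \<in> (lebesgue :: 'a measure) \<Otimes>\<^sub>M (lebesgue :: 'b measure) \<rightarrow>\<^sub>M borel"
    by (simp add: borel_prod)
  from measurable_compose[OF this borel_measurable_continuous_onI[OF assms]] show ?thesis .
qed

lemma riesz_kernel_measurable[measurable]:
  "(\<lambda>(x, y). ennreal (norm (x - y) powr r)) \<in> borel_measurable ((lebesgue :: 'a::euclidean_space measure) \<Otimes>\<^sub>M lebesgue)"
proof -
  have "(\<lambda>p::'a \<times> 'a. norm (fst p - snd p)) \<in> borel_measurable (lebesgue \<Otimes>\<^sub>M lebesgue)"
    by (intro borel_measurable_lebesgue_pair_continuous continuous_intros)
  then show ?thesis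
    using measurable_compose[of _ _ borel "\<lambda>z. ennreal (z powr r)"] by (simp add: case_prod_beta')
qed

lemma infdist_measurable[measurable]:
  "(\<lambda>x. infdist x A) \<in> borel_measurable (lebesgue :: 'a::euclidean_space measure)"
  by (intro borel_measurable_lebesgue_continuous continuous_intros)

lemma strip_sets[measurable]:
  assumes "open \<Omega>"
  shows "strip \<Omega> d \<in> sets lebesgue"
proof -
  have [measurable]: "\<Omega> \<in> sets lebesgue"
    using assms by simp
  show ?thesis
    unfolding strip_def by measurable
qed

section \<open>Splicing two sets at a given depth\<close>

definition splice_at_depth :: "'a::metric_space set \<Rightarrow> real \<Rightarrow> 'a set \<Rightarrow> 'a set \<Rightarrow> 'a set" where
  "splice_at_depth \<Omega> t A B = A \<inter> {x. t < infdist x (- \<Omega>)} \<union> B \<inter> {x. infdist x (- \<Omega>) \<le> t}"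

lemma splice_at_depth_sets:
  fixes A B :: "'a::euclidean_space set"
  assumes "A \<in> sets lebesgue" "B \<in> sets lebesgue"
  shows "splice_at_depth \<Omega> t A B \<in> sets lebesgue"
proof -
  have "open {x::'a. t < infdist x (- \<Omega>)}" "closed {x::'a. infdist x (- \<Omega>) \<le> t}"
    by (intro open_Collect_less closed_Collect_le continuous_intros)+
  then show ?thesis
    unfolding splice_at_depth_def using assms by auto
qed

lemma splice_at_depth_inner:
  "t \<le> d \<Longrightarrow> splice_at_depth \<Omega> t A B \<inter> (\<Omega> - strip \<Omega> d) = A \<inter> (\<Omega> - strip \<Omega> d)"
  by (auto simp: splice_at_depth_def strip_def)

lemma splice_at_depth_boundary:
  "d \<le> t \<Longrightarrow> splice_at_depth \<Omega> t A B \<inter> strip \<Omega> d = B \<inter> strip \<Omega> d"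
  by (auto simp: splice_at_depth_def strip_def)

lemma L1dist_char_eq_emeasure:
  fixes \<Omega> A B :: "'a::euclidean_space set"
  assumes "\<Omega> \<in> sets lebesgue" "A \<in> sets lebesgue" "B \<in> sets lebesgue"
  shows "L1dist_char \<Omega> A B = emeasure lebesgue (sym_diff A B \<inter> \<Omega>)"
proof -
  have "L1dist_char \<Omega> A B = (\<integral>\<^sup>+x. indicator (sym_diff A B \<inter> \<Omega>) x \<partial>lebesgue)"
    unfolding L1dist_char_def by (intro nn_integral_cong) (auto simp: indicator_def)
  also have "\<dots> = emeasure lebesgue (sym_diff A B \<inter> \<Omega>)"
    using assms by (intro nn_integral_indicator) auto
  finally show ?thesis .
qed

lemma L1dist_char_splice_at_depth_le:
  "L1dist_char \<Omega> (splice_at_depth \<Omega> t A B) B \<le> L1dist_char \<Omega> A B"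
  unfolding L1dist_char_def splice_at_depth_def
  by (intro nn_integral_mono ennreal_leI) (auto simp: indicator_def)

definition crossing_energy :: "real \<Rightarrow> 'a::euclidean_space set \<Rightarrow> 'a set \<Rightarrow> real \<Rightarrow> ennreal" where
  "crossing_energy s \<Omega> D t = (\<integral>\<^sup>+x. \<integral>\<^sup>+y. indicator \<Omega> x * indicator \<Omega> y *
      (if min (infdist x (-\<Omega>)) (infdist y (-\<Omega>)) \<le> t \<and> t < max (infdist x (-\<Omega>)) (infdist y (-\<Omega>)) then 1 else 0)
      * (indicator D x + indicator D y) * ennreal (norm (x - y) powr -(real DIM('a) + s)) \<partial>lebesgue \<partial>lebesgue)"

lemma J1_splice_at_depth_le:
  fixes \<Omega> A B :: "'a::euclidean_space set"
  assumes "t \<le> d" and [measurable]: "open \<Omega>" "A \<in> sets lebesgue" "B \<in> sets lebesgue"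
  shows "J1 s (splice_at_depth \<Omega> t A B) \<Omega>
    \<le> J1 s A \<Omega> + J1 s B (strip \<Omega> d) + crossing_energy s \<Omega> (sym_diff A B) t"
proof -
  let ?F = "splice_at_depth \<Omega> t A B" and ?D = "sym_diff A B"
  let ?k = "\<lambda>x y::'a. ennreal (norm (x - y) powr -(real DIM('a) + s))"
  let ?cross = "\<lambda>x y. indicator \<Omega> x * indicator \<Omega> y *
      (if min (infdist x (-\<Omega>)) (infdist y (-\<Omega>)) \<le> t \<and> t < max (infdist x (-\<Omega>)) (infdist y (-\<Omega>)) then 1 else 0)
      * (indicator ?D x + indicator ?D y)"
  let ?a = "\<lambda>x y. indicator (A \<inter> \<Omega>) x * indicator (-A \<inter> \<Omega>) y * ?k x y"
  let ?b = "\<lambda>x y. indicator (B \<inter> strip \<Omega> d) x * indicator (-B \<inter> strip \<Omega> d) y * ?k x y"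
  let ?c = "\<lambda>x y. ?cross x y * ?k x y"
  have [measurable]: "\<Omega> \<in> sets lebesgue" "- A \<in> sets lebesgue" "- B \<in> sets lebesgue"
    using assms(2) sets.compl_sets[OF assms(3)] sets.compl_sets[OF assms(4)]
    by (simp_all add: Compl_eq_Diff_UNIV)
  have [measurable]: "case_prod ?a \<in> borel_measurable (lebesgue \<Otimes>\<^sub>M lebesgue)"
    "case_prod ?b \<in> borel_measurable (lebesgue \<Otimes>\<^sub>M lebesgue)"
    "case_prod ?c \<in> borel_measurable (lebesgue \<Otimes>\<^sub>M lebesgue)"
    by measurable
  text \<open>A pair separated by \<open>?F\<close> is separated by \<open>A\<close> (both points deeper than \<open>t\<close>), by \<open>B\<close>
    (both in the strip), or crosses depth \<open>t\<close>; in the last case, if neither point lies in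
    \<open>A \<triangle> B\<close>, it is again separated by \<open>A\<close>.\<close>
  have "indicator (?F \<inter> \<Omega>) x * indicator (-?F \<inter> \<Omega>) y
      \<le> (indicator (A \<inter> \<Omega>) x * indicator (-A \<inter> \<Omega>) y
         + indicator (B \<inter> strip \<Omega> d) x * indicator (-B \<inter> strip \<Omega> d) y + ?cross x y :: ennreal)" for x y
    using assms(1) unfolding splice_at_depth_def strip_def by (auto simp: indicator_def)
  then have "indicator (?F \<inter> \<Omega>) x * indicator (-?F \<inter> \<Omega>) y * ?k x y \<le> ?a x y + ?b x y + ?c x y" for x y
    using mult_right_mono by (metis (no_types, lifting) distrib_right zero_le)
  then have "J1 s ?F \<Omega> \<le> (\<integral>\<^sup>+x. \<integral>\<^sup>+y. ?a x y + ?b x y + ?c x y \<partial>lebesgue \<partial>lebesgue)"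
    unfolding J1_def by (intro nn_integral_mono)
  also have "\<dots> = (\<integral>\<^sup>+x. (\<integral>\<^sup>+y. ?a x y \<partial>lebesgue) + (\<integral>\<^sup>+y. ?b x y \<partial>lebesgue) + (\<integral>\<^sup>+y. ?c x y \<partial>lebesgue) \<partial>lebesgue)"
    by (intro nn_integral_cong) (simp add: nn_integral_add)
  also have "\<dots> = (\<integral>\<^sup>+x. \<integral>\<^sup>+y. ?a x y \<partial>lebesgue \<partial>lebesgue) + (\<integral>\<^sup>+x. \<integral>\<^sup>+y. ?b x y \<partial>lebesgue \<partial>lebesgue)
      + (\<integral>\<^sup>+x. \<integral>\<^sup>+y. ?c x y \<partial>lebesgue \<partial>lebesgue)"
    by (simp add: nn_integral_add)
  also have "\<dots> = J1 s A \<Omega> + J1 s B (strip \<Omega> d) + crossing_energy s \<Omega> ?D t"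
    by (simp add: J1_def crossing_energy_def)
  finally show ?thesis .
qed

section \<open>Choosing the depth\<close>

lemma nn_integral_between_eq:
  fixes u v :: real
  shows "(\<integral>\<^sup>+t. c * (if min u v \<le> t \<and> t < max u v then 1 else 0) \<partial>lborel) = c * ennreal \<bar>u - v\<bar>"
proof -
  have "(\<integral>\<^sup>+t. c * (if min u v \<le> t \<and> t < max u v then 1 else 0) \<partial>lborel)
     = (\<integral>\<^sup>+t. c * indicator {min u v ..< max u v} t \<partial>lborel)"
    by (intro nn_integral_cong) (auto simp: indicator_def)
  also have "\<dots> = c * ennreal \<bar>u - v\<bar>"
    by (simp add: nn_integral_cmult_indicator abs_if max_def min_def)
  finally show ?thesis .
qed

text \<open>Integrating over all depths \<open>t\<close> trades the crossing condition for the factor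
  \<open>|d(x, \<Omega>\<^sup>c) - d(y, \<Omega>\<^sup>c)| \<le> |x - y|\<close>, which makes the kernel integrable.\<close>

lemma nn_integral_crossing_energy_le:
  fixes \<Omega> D :: "'a::euclidean_space set"
  assumes [measurable]: "open \<Omega>" "D \<in> sets lebesgue"
  shows "(\<integral>\<^sup>+t. crossing_energy s \<Omega> D t \<partial>lborel) \<le>
    (\<integral>\<^sup>+x. \<integral>\<^sup>+y. indicator \<Omega> x * indicator \<Omega> y * (indicator D x + indicator D y)
        * ennreal (norm (x - y) powr (1 - (real DIM('a) + s))) \<partial>lebesgue \<partial>lebesgue)"
proof -
  have [measurable]: "\<Omega> \<in> sets lebesgue"
    using assms(1) by simp
  define H where "H t x y = indicator \<Omega> x * indicator \<Omega> y *
      (if min (infdist x (-\<Omega>)) (infdist y (-\<Omega>)) \<le> t \<and> t < max (infdist x (-\<Omega>)) (infdist y (-\<Omega>)) then 1 else 0)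
      * (indicator D x + indicator D y) * ennreal (norm (x - y) powr -(real DIM('a) + s))" for t x y
  have H: "(\<lambda>p. H (fst (fst p)) (snd (fst p)) (snd p)) \<in> borel_measurable ((lborel \<Otimes>\<^sub>M lebesgue) \<Otimes>\<^sub>M (lebesgue :: 'a measure))"
  proof -
    have "(\<lambda>p. (snd (fst p), snd p)) \<in> (lborel \<Otimes>\<^sub>M lebesgue) \<Otimes>\<^sub>M (lebesgue :: 'a measure) \<rightarrow>\<^sub>M lebesgue \<Otimes>\<^sub>M lebesgue"
      by measurable
    from measurable_compose[OF this riesz_kernel_measurable]
    have [measurable]: "(\<lambda>p. ennreal (norm (snd (fst p) - snd p) powr -(real DIM('a) + s)))
        \<in> borel_measurable ((lborel \<Otimes>\<^sub>M lebesgue) \<Otimes>\<^sub>M (lebesgue :: 'a measure))"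
      by simp
    show ?thesis
      unfolding H_def by measurable
  qed
  have H_inner: "case_prod (\<lambda>t x. \<integral>\<^sup>+y. H t x y \<partial>lebesgue) \<in> borel_measurable (lborel \<Otimes>\<^sub>M (lebesgue :: 'a measure))"
    using lebesgue.borel_measurable_nn_integral[of "\<lambda>p y. H (fst p) (snd p) y"] H
    by (simp add: case_prod_beta')
  have H_x: "case_prod (\<lambda>t y. H t x y) \<in> borel_measurable (lborel \<Otimes>\<^sub>M (lebesgue :: 'a measure))" for x
  proof -
    have "(\<lambda>p. ((fst p, x), snd p)) \<in> lborel \<Otimes>\<^sub>M (lebesgue :: 'a measure) \<rightarrow>\<^sub>M (lborel \<Otimes>\<^sub>M lebesgue) \<Otimes>\<^sub>M lebesgue"
      by measurable
    from measurable_compose[OF this H] show ?thesis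
      by (simp add: case_prod_beta')
  qed
  have "(\<integral>\<^sup>+t. crossing_energy s \<Omega> D t \<partial>lborel) = (\<integral>\<^sup>+x. \<integral>\<^sup>+y. \<integral>\<^sup>+t. H t x y \<partial>lborel \<partial>lebesgue \<partial>lebesgue)"
    unfolding crossing_energy_def H_def[symmetric]
    by (simp add: lborel_lebesgue.Fubini'[OF H_inner] lborel_lebesgue.Fubini'[OF H_x])
  also have "\<dots> \<le> (\<integral>\<^sup>+x. \<integral>\<^sup>+y. indicator \<Omega> x * indicator \<Omega> y * (indicator D x + indicator D y)
        * ennreal (norm (x - y) powr (1 - (real DIM('a) + s))) \<partial>lebesgue \<partial>lebesgue)"
  proof (intro nn_integral_mono)
    fix x y :: 'a
    let ?C = "indicator \<Omega> x * indicator \<Omega> y * (indicator D x + indicator D y)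
        * ennreal (norm (x - y) powr -(real DIM('a) + s))"
    have "(\<integral>\<^sup>+t. H t x y \<partial>lborel) = ?C * ennreal \<bar>infdist x (-\<Omega>) - infdist y (-\<Omega>)\<bar>"
      unfolding H_def using nn_integral_between_eq[of ?C] by (simp add: ac_simps)
    also have "\<dots> \<le> ?C * ennreal (norm (x - y))"
      using infdist_triangle_abs[of x "-\<Omega>" y] by (intro mult_left_mono ennreal_leI) (auto simp: dist_norm)
    also have "\<dots> = indicator \<Omega> x * indicator \<Omega> y * (indicator D x + indicator D y)
        * ennreal (norm (x - y) powr (1 - (real DIM('a) + s)))"
      by (simp add: mult.assoc ennreal_mult'[symmetric] powr_mult_base mult.commute[of "norm (x - y) powr _"]
          algebra_simps)
    finally show "(\<integral>\<^sup>+t. H t x y \<partial>lborel) \<le> \<dots>" .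
  qed
  finally show ?thesis .
qed

lemma nn_integral_pair_riesz_kernel_le:
  fixes \<Omega> D :: "'a::euclidean_space set"
  assumes [measurable]: "open \<Omega>" "D \<in> sets lebesgue"
    and s: "0 < s" "s < 1" and R: "0 < R" and \<Omega>: "\<And>z. z \<in> \<Omega> \<Longrightarrow> \<Omega> \<subseteq> cball z R"
  shows "(\<integral>\<^sup>+x. \<integral>\<^sup>+y. indicator \<Omega> x * indicator \<Omega> y * (indicator D x + indicator D y)
        * ennreal (norm (x - y) powr (1 - (real DIM('a) + s))) \<partial>lebesgue \<partial>lebesgue)
    \<le> ennreal (8 * unit_ball_vol (real DIM('a)) * 2 powr real DIM('a) * (1 + R) / (1 - s))
        * emeasure lebesgue (D \<inter> \<Omega>)"
proof -
  let ?K = "4 * unit_ball_vol (real DIM('a)) * 2 powr real DIM('a) * (1 + R) / (1 - s)"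
  let ?f = "\<lambda>x y. indicator \<Omega> x * indicator \<Omega> y * indicator D x
      * ennreal (norm (x - y) powr (1 - (real DIM('a) + s)))"
  have [measurable]: "\<Omega> \<in> sets lebesgue"
    using assms(1) by simp
  have f[measurable]: "case_prod ?f \<in> borel_measurable (lebesgue \<Otimes>\<^sub>M lebesgue)"
    by measurable
  have "(\<integral>\<^sup>+y. ?f x y \<partial>lebesgue) \<le> ennreal ?K * indicator (D \<inter> \<Omega>) x" for x
  proof (cases "x \<in> D \<inter> \<Omega>")
    case True
    then have "(\<integral>\<^sup>+y. ?f x y \<partial>lebesgue)
        = (\<integral>\<^sup>+y. indicator \<Omega> y * ennreal (norm (x - y) powr (1 - (real DIM('a) + s))) \<partial>lebesgue)"
      by (intro nn_integral_cong) simp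
    also have "\<dots> \<le> ennreal ?K"
      using True by (intro nn_integral_riesz_kernel_le s R \<Omega>) simp
    finally show ?thesis
      using True by simp
  next
    case False
    then have "(\<lambda>y. ?f x y) = (\<lambda>y. 0)"
      by (auto simp: indicator_def)
    then show ?thesis
      by (simp only: nn_integral_const mult_zero_left zero_le)
  qed
  then have "(\<integral>\<^sup>+x. \<integral>\<^sup>+y. ?f x y \<partial>lebesgue \<partial>lebesgue) \<le> (\<integral>\<^sup>+x. ennreal ?K * indicator (D \<inter> \<Omega>) x \<partial>lebesgue)"
    by (intro nn_integral_mono)
  also have "\<dots> = ennreal ?K * emeasure lebesgue (D \<inter> \<Omega>)"
    by (rule nn_integral_cmult_indicator) simp
  finally have half: "(\<integral>\<^sup>+x. \<integral>\<^sup>+y. ?f x y \<partial>lebesgue \<partial>lebesgue) \<le> ennreal ?K * emeasure lebesgue (D \<inter> \<Omega>)" .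
  have "(\<integral>\<^sup>+x. \<integral>\<^sup>+y. indicator \<Omega> x * indicator \<Omega> y * (indicator D x + indicator D y)
        * ennreal (norm (x - y) powr (1 - (real DIM('a) + s))) \<partial>lebesgue \<partial>lebesgue)
    = (\<integral>\<^sup>+x. \<integral>\<^sup>+y. ?f x y + ?f y x \<partial>lebesgue \<partial>lebesgue)"
    by (intro nn_integral_cong) (simp add: distrib_left distrib_right norm_minus_commute ac_simps)
  also have "\<dots> = (\<integral>\<^sup>+x. \<integral>\<^sup>+y. ?f x y \<partial>lebesgue \<partial>lebesgue) + (\<integral>\<^sup>+x. \<integral>\<^sup>+y. ?f y x \<partial>lebesgue \<partial>lebesgue)"
    by (simp add: nn_integral_add)
  also have "(\<integral>\<^sup>+x. \<integral>\<^sup>+y. ?f y x \<partial>lebesgue \<partial>lebesgue) = (\<integral>\<^sup>+y. \<integral>\<^sup>+x. ?f y x \<partial>lebesgue \<partial>lebesgue)"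
    by (rule lebesgue_lebesgue.Fubini'[symmetric]) (use f in \<open>simp add: case_prod_beta'\<close>)
  also have "(\<integral>\<^sup>+x. \<integral>\<^sup>+y. ?f x y \<partial>lebesgue \<partial>lebesgue) + (\<integral>\<^sup>+y. \<integral>\<^sup>+x. ?f y x \<partial>lebesgue \<partial>lebesgue)
      \<le> 2 * ennreal ?K * emeasure lebesgue (D \<inter> \<Omega>)"
    using add_mono[OF half half] by (simp only: mult_2 distrib_right)
  also have "2 * ennreal ?K = ennreal (8 * unit_ball_vol (real DIM('a)) * 2 powr real DIM('a) * (1 + R) / (1 - s))"
    using ennreal_mult'[of 2 ?K] by (simp add: mult.assoc)
  finally show ?thesis .
qed

lemma crossing_energy_small_at_some_depth:
  fixes \<Omega> :: "'a::euclidean_space set"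
  assumes "bounded \<Omega>" "open \<Omega>"
  obtains C where "\<And>s D a b. 0 < s \<Longrightarrow> s < 1 \<Longrightarrow> D \<in> sets lebesgue \<Longrightarrow> a < b \<Longrightarrow>
    \<exists>t\<in>{a<..<b}. ennreal (1 - s) * crossing_energy s \<Omega> D t
      \<le> ennreal (C * measure lebesgue (D \<inter> \<Omega>) / (b - a) + (1 - s))"
proof
  define R where "R = diameter \<Omega> + 1"
  define C where "C = 8 * unit_ball_vol (real DIM('a)) * 2 powr real DIM('a) * (1 + R)"
  have R: "0 < R"
    using diameter_ge_0[OF assms(1)] by (simp add: R_def)
  have \<Omega>: "\<Omega> \<subseteq> cball z R" if "z \<in> \<Omega>" for z
    using diameter_bounded_bound[OF assms(1) that] by (fastforce simp: R_def)
  fix s a b :: real and D :: "'a set"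
  assume s: "0 < s" "s < 1" and D: "D \<in> sets lebesgue" and "a < b"
  let ?m = "measure lebesgue (D \<inter> \<Omega>)"
  have "emeasure lebesgue (D \<inter> \<Omega>) = ennreal ?m"
    using assms D by (intro emeasure_eq_measure2 bounded_set_imp_lmeasurable) auto
  then have "(\<integral>\<^sup>+t. crossing_energy s \<Omega> D t \<partial>lborel) \<le> ennreal (C / (1 - s)) * ennreal ?m"
    using order_trans[OF nn_integral_crossing_energy_le[OF assms(2) D] nn_integral_pair_riesz_kernel_le[OF assms(2) D s R \<Omega>]]
    by (simp add: C_def)
  also have "\<dots> = ennreal (C / (1 - s) * ?m)"
    by (rule ennreal_mult''[symmetric]) simp
  finally have "(\<integral>\<^sup>+t. crossing_energy s \<Omega> D t \<partial>lborel) \<le> ennreal (C / (1 - s) * ?m)" .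
  from exists_le_average[OF this _ \<open>a < b\<close>]
  obtain t where t: "t \<in> {a<..<b}" "crossing_energy s \<Omega> D t \<le> ennreal (C / (1 - s) * ?m / (b - a) + 1)"
    using R s by (auto simp: C_def)
  have "ennreal (1 - s) * crossing_energy s \<Omega> D t \<le> ennreal ((1 - s) * (C / (1 - s) * ?m / (b - a) + 1))"
    using mult_left_mono[OF t(2), of "ennreal (1 - s)"] s by (simp add: ennreal_mult')
  also have "(1 - s) * (C / (1 - s) * ?m / (b - a) + 1) = C * ?m / (b - a) + (1 - s)"
    using s by (simp add: distrib_left)
  finally show "\<exists>t\<in>{a<..<b}. ennreal (1 - s) * crossing_energy s \<Omega> D t \<le> ennreal (C * ?m / (b - a) + (1 - s))"
    using t(1) by blast
qed

lemma exists_depths_with_vanishing_crossing_energy: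
  fixes \<Omega> E :: "'a::euclidean_space set" and Es :: "real \<Rightarrow> 'a set"
  assumes "bounded \<Omega>" "open \<Omega>" "E \<in> sets lebesgue" "\<And>s. s \<in> {0<..<1} \<Longrightarrow> Es s \<in> sets lebesgue"
    and "((\<lambda>s. L1dist_char \<Omega> (Es s) E) \<longlongrightarrow> 0) (at_left 1)" "a < b"
  obtains t where "\<And>s. s \<in> {0<..<1} \<Longrightarrow> t s \<in> {a<..<b}"
    and "((\<lambda>s. ennreal (1 - s) * crossing_energy s \<Omega> (sym_diff (Es s) E) (t s)) \<longlongrightarrow> 0) (at_left 1)"
proof -
  obtain C where C: "\<And>s D a b. 0 < s \<Longrightarrow> s < 1 \<Longrightarrow> D \<in> sets lebesgue \<Longrightarrow> a < b \<Longrightarrow>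
      \<exists>t\<in>{a<..<b}. ennreal (1 - s) * crossing_energy s \<Omega> D t
        \<le> ennreal (C * measure lebesgue (D \<inter> \<Omega>) / (b - a) + (1 - s))"
    using crossing_energy_small_at_some_depth[OF assms(1,2)] by blast
  define m where "m s = measure lebesgue (sym_diff (Es s) E \<inter> \<Omega>)" for s
  define bound where "bound s = ennreal (C * m s / (b - a) + (1 - s))" for s
  have "\<forall>s\<in>{0<..<1}. \<exists>t. t \<in> {a<..<b} \<and> ennreal (1 - s) * crossing_energy s \<Omega> (sym_diff (Es s) E) t \<le> bound s"
    (is "\<forall>s\<in>_. \<exists>t. t \<in> _ \<and> ?good s t")
    using C assms(3,4,6) unfolding m_def bound_def Bex_def[symmetric] by (simp add: sets.Un sets.Diff)
  from bchoice[OF this] obtain t where t: "\<forall>s\<in>{0<..<1}. t s \<in> {a<..<b} \<and> ?good s (t s)" ..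
  then have t_range: "t s \<in> {a<..<b}" if "s \<in> {0<..<1}" for s
    using that by blast
  have "\<forall>\<^sub>F s in at_left 1. L1dist_char \<Omega> (Es s) E = ennreal (m s)"
  proof (rule eventually_at_left_1)
    fix s :: real assume "0 < s" "s < 1"
    then have Es: "Es s \<in> sets lebesgue"
      using assms(4) by simp
    then have "sym_diff (Es s) E \<inter> \<Omega> \<in> lmeasurable"
      using assms(1,2,3) by (intro bounded_set_imp_lmeasurable) auto
    with Es show "L1dist_char \<Omega> (Es s) E = ennreal (m s)"
      using assms(2,3) by (simp add: L1dist_char_eq_emeasure emeasure_eq_measure2 m_def)
  qed
  with assms(5) have "((\<lambda>s. ennreal (m s)) \<longlongrightarrow> ennreal 0) (at_left 1)"
    by (simp add: tendsto_cong)
  then have "(m \<longlongrightarrow> 0) (at_left 1)"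
    by (rule tendsto_ennreal_iff[THEN iffD1, rotated 2]) (simp_all add: m_def)
  then have "(bound \<longlongrightarrow> ennreal (C * 0 / (b - a) + (1 - 1))) (at_left 1)"
    unfolding bound_def using \<open>a < b\<close> by (intro tendsto_ennrealI tendsto_intros) auto
  then have bound: "(bound \<longlongrightarrow> 0) (at_left 1)"
    by simp
  have "\<forall>\<^sub>F s in at_left 1. ennreal (1 - s) * crossing_energy s \<Omega> (sym_diff (Es s) E) (t s) \<le> bound s"
    using t by (intro eventually_at_left_1) simp
  then have "((\<lambda>s. ennreal (1 - s) * crossing_energy s \<Omega> (sym_diff (Es s) E) (t s)) \<longlongrightarrow> 0) (at_left 1)"
    by (intro tendsto_sandwich[OF _ _ tendsto_const bound]) simp_all
  with t_range show ?thesis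
    by (rule that)
qed

lemma Liminf_J1_splice_at_depth_le:
  fixes \<Omega> E :: "'a::euclidean_space set" and Es :: "real \<Rightarrow> 'a set"
  assumes "open \<Omega>" "E \<in> sets lebesgue" "\<And>s. s \<in> {0<..<1} \<Longrightarrow> Es s \<in> sets lebesgue"
    and "\<And>s. s \<in> {0<..<1} \<Longrightarrow> t s \<le> d"
    and "((\<lambda>s. ennreal (1 - s) * crossing_energy s \<Omega> (sym_diff (Es s) E) (t s)) \<longlongrightarrow> 0) (at_left 1)"
  shows "Liminf (at_left 1) (\<lambda>s. ennreal (1 - s) * J1 s (splice_at_depth \<Omega> (t s) (Es s) E) \<Omega>)
    \<le> Liminf (at_left 1) (\<lambda>s. ennreal (1 - s) * J1 s (Es s) \<Omega>)
      + Limsup (at_left 1) (\<lambda>s. ennreal (1 - s) * J1 s E (strip \<Omega> d))"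
proof (rule Liminf_le_Liminf_add_Limsup_of_vanishing[OF _ _ assms(5)])
  show "\<forall>\<^sub>F s in at_left 1. ennreal (1 - s) * J1 s (splice_at_depth \<Omega> (t s) (Es s) E) \<Omega>
      \<le> ennreal (1 - s) * J1 s (Es s) \<Omega> + ennreal (1 - s) * J1 s E (strip \<Omega> d)
        + ennreal (1 - s) * crossing_energy s \<Omega> (sym_diff (Es s) E) (t s)"
  proof (rule eventually_at_left_1)
    fix s :: real assume "0 < s" "s < 1"
    then have "t s \<le> d" "Es s \<in> sets lebesgue"
      using assms(3,4) by simp_all
    from J1_splice_at_depth_le[OF this(1) assms(1) this(2) assms(2), of s]
    show "ennreal (1 - s) * J1 s (splice_at_depth \<Omega> (t s) (Es s) E) \<Omega>
      \<le> ennreal (1 - s) * J1 s (Es s) \<Omega> + ennreal (1 - s) * J1 s E (strip \<Omega> d)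
        + ennreal (1 - s) * crossing_energy s \<Omega> (sym_diff (Es s) E) (t s)"
      by (auto dest: mult_left_mono[of _ _ "ennreal (1 - s)"] simp: distrib_left)
  qed
qed simp

theorem corollary12:
  fixes \<Omega> E :: "'a::euclidean_space set" and Es :: "real \<Rightarrow> 'a set"
    and \<delta>1 \<delta>2 :: real
  assumes "bounded \<Omega>" "connected \<Omega>" "open \<Omega>"
    and "DIM('a) = 1 \<or> lipschitz_boundary \<Omega>"
    and "E \<in> sets lebesgue"
    and "\<And>s. s \<in> {0<..<1} \<Longrightarrow> Es s \<in> sets lebesgue"
    and "((\<lambda>s. L1dist_char \<Omega> (Es s) E) \<longlongrightarrow> 0) (at_left 1)"
    and "\<And>s. s \<in> {0<..<1} \<Longrightarrow> J1 s (Es s) \<Omega> < \<infinity>"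
    and "\<And>s. s \<in> {0<..<1} \<Longrightarrow> J1 s E \<Omega> < \<infinity>"
    and "\<delta>1 > \<delta>2" "\<delta>2 > 0"
  shows "\<exists>F :: real \<Rightarrow> 'a set.
    (\<forall>s \<in> {0<..<1}. F s \<in> sets lebesgue) \<and>
    ((\<lambda>s. L1dist_char \<Omega> (F s) E) \<longlongrightarrow> 0) (at_left 1) \<and>
    (\<forall>s \<in> {0<..<1}. F s \<inter> (\<Omega> - strip \<Omega> \<delta>1) = Es s \<inter> (\<Omega> - strip \<Omega> \<delta>1)
                   \<and> F s \<inter> strip \<Omega> \<delta>2 = E \<inter> strip \<Omega> \<delta>2) \<and>
    (\<forall>\<epsilon>>0. Liminf (at_left 1) (\<lambda>s. ennreal (1 - s) * J1 s (F s) \<Omega>)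
              \<le> Liminf (at_left 1) (\<lambda>s. ennreal (1 - s) * J1 s (Es s) \<Omega>)
                + Limsup (at_left 1) (\<lambda>s. ennreal (1 - s) * J1 s E (strip \<Omega> (\<delta>1 + \<epsilon>))))"
proof -
  obtain t where t: "\<And>s. s \<in> {0<..<1} \<Longrightarrow> t s \<in> {\<delta>2<..<\<delta>1}"
    and vanishing: "((\<lambda>s. ennreal (1 - s) * crossing_energy s \<Omega> (sym_diff (Es s) E) (t s)) \<longlongrightarrow> 0) (at_left 1)"
    using exists_depths_with_vanishing_crossing_energy[OF assms(1,3,5,6,7,10)] by blast
  define F where "F s = splice_at_depth \<Omega> (t s) (Es s) E" for s
  show ?thesis
  proof (intro exI[of _ F] conjI ballI allI impI)
    fix s :: real assume s: "s \<in> {0<..<1}"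
    show "F s \<in> sets lebesgue"
      unfolding F_def using assms(6)[OF s] assms(5) by (rule splice_at_depth_sets)
    show "F s \<inter> (\<Omega> - strip \<Omega> \<delta>1) = Es s \<inter> (\<Omega> - strip \<Omega> \<delta>1)" "F s \<inter> strip \<Omega> \<delta>2 = E \<inter> strip \<Omega> \<delta>2"
      unfolding F_def using t[OF s] by (simp_all add: splice_at_depth_inner splice_at_depth_boundary)
  next
    show "((\<lambda>s. L1dist_char \<Omega> (F s) E) \<longlongrightarrow> 0) (at_left 1)"
      unfolding F_def
      by (intro tendsto_sandwich[OF _ _ tendsto_const assms(7)]) (simp_all add: L1dist_char_splice_at_depth_le)
  next
    fix \<epsilon> :: real assume "\<epsilon> > 0"
    then have "t s \<le> \<delta>1 + \<epsilon>" if "s \<in> {0<..<1}" for s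
      using t[OF that] by simp
    from Liminf_J1_splice_at_depth_le[OF assms(3,5,6) this vanishing]
    show "Liminf (at_left 1) (\<lambda>s. ennreal (1 - s) * J1 s (F s) \<Omega>)
        \<le> Liminf (at_left 1) (\<lambda>s. ennreal (1 - s) * J1 s (Es s) \<Omega>)
          + Limsup (at_left 1) (\<lambda>s. ennreal (1 - s) * J1 s E (strip \<Omega> (\<delta>1 + \<epsilon>)))"
      unfolding F_def .
  qed
qed

end
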